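(* Let $R$ be a principal Artinian ring and let $f, g \in R[x]$ be nilpotent polynomials, not both zero. Let $d$ be a generator of the ideal $(c(f), c(g))$ and let $\tilde f, \tilde g \in R[x]$ satisfy $f = d\tilde f$ and $g = d\tilde g$. Then $$\mathrm{Rres}_R(f,g) = \{\, d s : s\in R,\ (s \bmod \mathrm{Ann}(d)) \in \mathrm{Rres}_{R/\mathrm{Ann}(d)}(\bar{\tilde f}, \bar{\tilde g})\,\}$$ (i.e. $\mathrm{rres}(f,g) = d\cdot\mathrm{rres}_{R/\mathrm{Ann}(d)}(\tilde f,\tilde g)$), and at least one of $\tilde f$, $\tilde g$ is not nilpotent.
   Context: A principal Artinian ring is a commutative ring with identity in which every ideal is principal and which satisfies the descending chain condition on ideals. For $f=\sum a_ix^i$, the content ideal is $C(f)=(a_0,\dots,a_d)$ and $c(f)$ is any generator of it. $\mathrm{Ann}(d)=\{s\in R: sd=0\}$; bars denote images in $(R/\mathrm{Ann}(d))[x]$. For a commutative ring $S$ and $f,g\in S[x]$, $\mathrm{Rres}_S(f,g)=(f,g)\cap S$ with $(f,g)$ the ideal of $S[x]$ generated by $f,g$. *)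

theory Defs
  imports "HOL-Computational_Algebra.Polynomial"
begin

definition is_ideal :: "'a::comm_ring_1 set \<Rightarrow> bool" where
  "is_ideal I \<longleftrightarrow> 0 \<in> I \<and> (\<forall>x\<in>I. \<forall>y\<in>I. x + y \<in> I) \<and> (\<forall>r. \<forall>x\<in>I. r * x \<in> I)"

definition ideal_span :: "'a::comm_ring_1 set \<Rightarrow> 'a set" where
  "ideal_span S = \<Inter>{I. is_ideal I \<and> S \<subseteq> I}"

definition principal_ideal :: "'a::comm_ring_1 \<Rightarrow> 'a set" where
  "principal_ideal a = {r * a | r. True}"

definition principal_ring :: "'a::comm_ring_1 itself \<Rightarrow> bool" where
  "principal_ring _ \<longleftrightarrow> (\<forall>I::'a set. is_ideal I \<longrightarrow> (\<exists>a. I = principal_ideal a))"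

definition artinian_ring :: "'a::comm_ring_1 itself \<Rightarrow> bool" where
  "artinian_ring _ \<longleftrightarrow> \<not> (\<exists>F :: nat \<Rightarrow> 'a set. (\<forall>n. is_ideal (F n)) \<and> (\<forall>n. F (Suc n) \<subset> F n))"

definition content_ideal :: "'a::comm_ring_1 poly \<Rightarrow> 'a set" where
  "content_ideal f = ideal_span (range (coeff f))"

definition nilpotent_poly :: "'a::comm_ring_1 poly \<Rightarrow> bool" where
  "nilpotent_poly p \<longleftrightarrow> (\<exists>n. p ^ n = 0)"

definition ann :: "'a::comm_ring_1 \<Rightarrow> 'a set" where
  "ann d = {s. s * d = 0}"

(* Rres_R(f,g) = (f,g) \<inter> R, constants identified with R *)
definition rres :: "'a::comm_ring_1 poly \<Rightarrow> 'a poly \<Rightarrow> 'a set" where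
  "rres f g = {c. \<exists>u v. u * f + v * g = [:c:]}"

(* Preimage in R of Rres_{R/I}(fbar, gbar): the set of s \<in> R whose class mod I lies in
   the ideal (fbar, gbar) of (R/I)[x].  Every polynomial over R/I lifts to R[x], and
   equality in (R/I)[x] means all coefficients of the difference lie in I. *)
definition rres_mod :: "'a::comm_ring_1 set \<Rightarrow> 'a poly \<Rightarrow> 'a poly \<Rightarrow> 'a set" where
  "rres_mod I f g = {s. \<exists>u v. \<forall>i. coeff (u * f + v * g - [:s:]) i \<in> I}"

end

theory Submission
  imports Defs
begin

text \<open>
  Since \<open>f = d ft\<close> and \<open>g = d gt\<close>, a combination \<open>u f + v g\<close> equals the constant \<open>c\<close>
  exactly when \<open>c = d s\<close> with \<open>u ft + v gt - s\<close> annihilated by \<open>d\<close>, i.e. vanishing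
  modulo \<open>Ann(d)\<close>. If \<open>ft\<close> and \<open>gt\<close> were both nilpotent, all their coefficients would be
  nilpotent, so the content ideals of \<open>f\<close> and \<open>g\<close>, and hence \<open>(d)\<close>, would lie in the ideal
  \<open>d \<cdot> Nil(R)\<close>; then \<open>d = d x\<close> with \<open>x\<close> nilpotent, whence \<open>d = d x\<^sup>n = 0\<close> and \<open>f = g = 0\<close>.
\<close>

definition nilpotent :: "'a::comm_ring_1 \<Rightarrow> bool" where
  "nilpotent a \<longleftrightarrow> (\<exists>n. a ^ n = 0)"

lemma nilpotent_poly_iff_nilpotent: "nilpotent_poly p \<longleftrightarrow> nilpotent p"
  unfolding nilpotent_poly_def nilpotent_def ..

lemma nilpotent_0 [simp]: "nilpotent 0"
  unfolding nilpotent_def by (metis power_one_right)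

lemma nilpotent_add:
  fixes a b :: "'a::comm_ring_1"
  assumes "nilpotent a" "nilpotent b"
  shows "nilpotent (a + b)"
proof -
  obtain m n where m: "a ^ m = 0" and n: "b ^ n = 0"
    using assms unfolding nilpotent_def by blast
  have "of_nat ((m + n) choose k) * a ^ k * b ^ (m + n - k) = 0" for k
  proof (cases "m \<le> k")
    case True
    then have "a ^ k = a ^ m * a ^ (k - m)" by (simp flip: power_add)
    then show ?thesis using m by simp
  next
    case False
    then have "b ^ (m + n - k) = b ^ n * b ^ (m - k)" by (simp add: add.commute flip: power_add)
    then show ?thesis using n by simp
  qed
  then have "(a + b) ^ (m + n) = 0" by (simp add: binomial_ring)
  then show ?thesis unfolding nilpotent_def by blast
qed

lemma nilpotent_mult_left:
  fixes a :: "'a::comm_ring_1"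
  assumes "nilpotent a"
  shows "nilpotent (r * a)"
  using assms unfolding nilpotent_def by (metis mult_zero_right power_mult_distrib)

lemma nilpotent_diff:
  fixes a b :: "'a::comm_ring_1"
  assumes "nilpotent a" "nilpotent b"
  shows "nilpotent (a - b)"
  using nilpotent_add[OF assms(1) nilpotent_mult_left[OF assms(2), of "- 1"]] by simp

lemma nilpotent_const_poly_iff: "nilpotent [:a:] \<longleftrightarrow> nilpotent a"
  unfolding nilpotent_def by (simp add: poly_const_pow)

lemma nilpotent_coeff_0:
  fixes p :: "'a::comm_ring_1 poly"
  assumes "nilpotent p"
  shows "nilpotent (coeff p 0)"
proof -
  obtain n where "p ^ n = 0" using assms unfolding nilpotent_def by blast
  then have "coeff p 0 ^ n = 0" by (metis coeff_0 coeff_0_power)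
  then show ?thesis unfolding nilpotent_def by blast
qed

lemma nilpotent_pCons_0D:
  fixes q :: "'a::comm_ring_1 poly"
  assumes "nilpotent (pCons 0 q)"
  shows "nilpotent q"
proof -
  obtain m where "pCons 0 q ^ m = 0" using assms unfolding nilpotent_def by blast
  moreover have "pCons 0 q = monom 1 1 * q"
    by (simp add: monom_Suc)
  ultimately have shifted: "monom 1 m * q ^ m = 0"
    by (simp add: power_mult_distrib monom_power)
  have "q ^ m = 0"
  proof (rule poly_eqI)
    fix j
    have "coeff (q ^ m) j = coeff (monom 1 m * q ^ m) (j + m)"
      by (simp add: coeff_monom_mult)
    then show "coeff (q ^ m) j = coeff 0 j" using shifted by simp
  qed
  then show ?thesis unfolding nilpotent_def by blast
qed

lemma nilpotent_coeff:
  fixes p :: "'a::comm_ring_1 poly"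
  assumes "nilpotent p"
  shows "nilpotent (coeff p i)"
  using assms
proof (induction i arbitrary: p)
  case 0
  then show ?case by (rule nilpotent_coeff_0)
next
  case (Suc i)
  obtain a q where p: "p = pCons a q" by (cases p)
  have "nilpotent [:a:]"
    using nilpotent_coeff_0[OF Suc.prems] p by (simp add: nilpotent_const_poly_iff)
  then have "nilpotent (p - [:a:])" using Suc.prems by (simp add: nilpotent_diff)
  then have "nilpotent q" using p by (simp add: nilpotent_pCons_0D)
  then show ?case using p Suc.IH by simp
qed

lemma ideal_span_least: "is_ideal I \<Longrightarrow> S \<subseteq> I \<Longrightarrow> ideal_span S \<subseteq> I"
  unfolding ideal_span_def by blast

lemma is_ideal_mult_nilpotents: "is_ideal {d * x | x. nilpotent x}"
  unfolding is_ideal_def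
proof (intro conjI ballI allI)
  show "0 \<in> {d * x | x. nilpotent x}"
    using nilpotent_0 by (intro CollectI exI[of _ 0]) simp
next
  fix y z assume "y \<in> {d * x | x. nilpotent x}" "z \<in> {d * x | x. nilpotent x}"
  then obtain a b where "y = d * a" "z = d * b" "nilpotent a" "nilpotent b" by blast
  then show "y + z \<in> {d * x | x. nilpotent x}"
    by (intro CollectI exI[of _ "a + b"]) (simp add: distrib_left nilpotent_add)
next
  fix r y assume "y \<in> {d * x | x. nilpotent x}"
  then obtain a where "y = d * a" "nilpotent a" by blast
  then show "r * y \<in> {d * x | x. nilpotent x}"
    by (intro CollectI exI[of _ "r * a"]) (simp add: mult.left_commute nilpotent_mult_left)
qed

lemma content_ideal_smult_subset_mult_nilpotents:
  assumes "nilpotent p"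
  shows "content_ideal (smult d p) \<subseteq> {d * x | x. nilpotent x}"
  unfolding content_ideal_def
  using is_ideal_mult_nilpotents by (rule ideal_span_least) (auto intro: nilpotent_coeff[OF assms])

lemma eq_0_if_fixed_by_nilpotent:
  fixes d x :: "'a::comm_ring_1"
  assumes "d = d * x" and "nilpotent x"
  shows "d = 0"
proof -
  obtain k where "x ^ k = 0" using assms(2) unfolding nilpotent_def by blast
  moreover have "d * x ^ n = d" for n
    by (induction n) (simp, metis assms(1) mult.assoc mult.commute power_Suc)
  ultimately show ?thesis by (metis mult_zero_right)
qed

lemma content_generator_eq_0_if_nilpotent_cofactors:
  fixes ft gt :: "'a::comm_ring_1 poly"
  assumes "ideal_span (content_ideal (smult d ft) \<union> content_ideal (smult d gt)) = principal_ideal d"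
    and "nilpotent ft" and "nilpotent gt"
  shows "d = 0"
proof -
  have "d \<in> principal_ideal d"
    unfolding principal_ideal_def by (metis (mono_tags, lifting) mem_Collect_eq mult_1)
  also have "\<dots> \<subseteq> {d * x | x. nilpotent x}"
    unfolding assms(1)[symmetric] using is_ideal_mult_nilpotents[of d]
    by (rule ideal_span_least)
      (use content_ideal_smult_subset_mult_nilpotents assms(2,3) in blast)
  finally obtain x where "d = d * x" "nilpotent x" by blast
  then show ?thesis by (rule eq_0_if_fixed_by_nilpotent)
qed

lemma rres_smult:
  "rres (smult d ft) (smult d gt) = {d * s | s. s \<in> rres_mod (ann d) ft gt}"
proof (intro equalityI subsetI)
  fix c assume "c \<in> rres (smult d ft) (smult d gt)"
  then obtain u v where uv: "u * smult d ft + v * smult d gt = [:c:]"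
    unfolding rres_def by blast
  define h where "h = u * ft + v * gt"
  have dh: "smult d h = [:c:]" using uv unfolding h_def by (simp add: smult_add_right)
  have "coeff (h - [:coeff h 0:]) i \<in> ann d" for i
    using arg_cong[OF dh, of "\<lambda>p. coeff p i"]
    by (cases i) (simp_all add: ann_def mult.commute)
  then have "coeff h 0 \<in> rres_mod (ann d) ft gt" unfolding rres_mod_def h_def by blast
  moreover have "c = d * coeff h 0" using arg_cong[OF dh, of "\<lambda>p. coeff p 0"] by simp
  ultimately show "c \<in> {d * s | s. s \<in> rres_mod (ann d) ft gt}" by blast
next
  fix c assume "c \<in> {d * s | s. s \<in> rres_mod (ann d) ft gt}"
  then obtain s u v where c: "c = d * s"
    and killed: "\<forall>i. coeff (u * ft + v * gt - [:s:]) i \<in> ann d"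
    unfolding rres_mod_def by blast
  have "u * smult d ft + v * smult d gt - [:c:] = smult d (u * ft + v * gt - [:s:])"
    unfolding c by (simp add: smult_add_right smult_diff_right)
  also have "\<dots> = 0"
    using killed by (intro poly_eqI) (simp add: ann_def mult.commute)
  finally show "c \<in> rres (smult d ft) (smult d gt)" unfolding rres_def by auto
qed

theorem lemma5p4:
  fixes f g ft gt :: "'a::comm_ring_1 poly" and d :: 'a
  assumes "principal_ring TYPE('a)"
    and "artinian_ring TYPE('a)"
    and "nilpotent_poly f" and "nilpotent_poly g"
    and "f \<noteq> 0 \<or> g \<noteq> 0"
    and "ideal_span (content_ideal f \<union> content_ideal g) = principal_ideal d"
    and "f = smult d ft" and "g = smult d gt"
  shows "rres f g = {d * s | s. s \<in> rres_mod (ann d) ft gt}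
         \<and> (\<not> nilpotent_poly ft \<or> \<not> nilpotent_poly gt)"
proof
  show "rres f g = {d * s | s. s \<in> rres_mod (ann d) ft gt}"
    unfolding assms(7,8) by (rule rres_smult)
  show "\<not> nilpotent_poly ft \<or> \<not> nilpotent_poly gt"
  proof (rule ccontr)
    assume "\<not> ?thesis"
    then have "d = 0"
      using content_generator_eq_0_if_nilpotent_cofactors assms(6-8)
      by (auto simp: nilpotent_poly_iff_nilpotent)
    then show False using assms(5,7,8) by simp
  qed
qed

end
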